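(* If $G$ is a countably infinite connected HE-homogeneous graph, then $G$ is MB-homogeneous.
   Context: All graphs are undirected and loopless; subgraphs are induced. A homomorphism maps adjacent vertices to adjacent vertices; a monomorphism is an injective homomorphism; a bimorphism of $G$ is a bijective endomorphism $G\to G$. $G$ is HE-homogeneous if every homomorphism between finite induced subgraphs of $G$ is the restriction of a surjective endomorphism of $G$; $G$ is MB-homogeneous if every monomorphism between finite induced subgraphs of $G$ is the restriction of a bimorphism of $G$. *)

theory Defs
  imports Main "HOL-Library.Countable_Set"
begin

definition graph :: "'a set \<Rightarrow> ('a \<Rightarrow> 'a \<Rightarrow> bool) \<Rightarrow> bool" where
  "graph V E \<longleftrightarrow> (\<forall>x y. E x y \<longrightarrow> x \<in> V \<and> y \<in> V \<and> E y x) \<and> (\<forall>x. \<not> E x x)"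

definition connected_graph :: "'a set \<Rightarrow> ('a \<Rightarrow> 'a \<Rightarrow> bool) \<Rightarrow> bool" where
  "connected_graph V E \<longleftrightarrow> (\<forall>x\<in>V. \<forall>y\<in>V. E\<^sup>*\<^sup>* x y)"

definition is_hom :: "('a \<Rightarrow> 'a \<Rightarrow> bool) \<Rightarrow> 'a set \<Rightarrow> 'a set \<Rightarrow> ('a \<Rightarrow> 'a) \<Rightarrow> bool" where
  "is_hom E A B f \<longleftrightarrow> f ` A \<subseteq> B \<and> (\<forall>x\<in>A. \<forall>y\<in>A. E x y \<longrightarrow> E (f x) (f y))"

definition is_mono :: "('a \<Rightarrow> 'a \<Rightarrow> bool) \<Rightarrow> 'a set \<Rightarrow> 'a set \<Rightarrow> ('a \<Rightarrow> 'a) \<Rightarrow> bool" where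
  "is_mono E A B f \<longleftrightarrow> is_hom E A B f \<and> inj_on f A"

definition HE_homogeneous :: "'a set \<Rightarrow> ('a \<Rightarrow> 'a \<Rightarrow> bool) \<Rightarrow> bool" where
  "HE_homogeneous V E \<longleftrightarrow>
     (\<forall>A B f. finite A \<and> A \<subseteq> V \<and> finite B \<and> B \<subseteq> V \<and> is_hom E A B f \<longrightarrow>
        (\<exists>g. is_hom E V V g \<and> g ` V = V \<and> (\<forall>x\<in>A. g x = f x)))"

definition MB_homogeneous :: "'a set \<Rightarrow> ('a \<Rightarrow> 'a \<Rightarrow> bool) \<Rightarrow> bool" where
  "MB_homogeneous V E \<longleftrightarrow>
     (\<forall>A B f. finite A \<and> A \<subseteq> V \<and> finite B \<and> B \<subseteq> V \<and> is_mono E A B f \<longrightarrow>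
        (\<exists>g. is_hom E V V g \<and> bij_betw g V V \<and> (\<forall>x\<in>A. g x = f x)))"

end

theory Submission
  imports Defs
begin

text \<open>
  In an HE-homogeneous graph, the map folding an edge d--e onto d and fixing a finite set X of
  other neighbours of d extends to an endomorphism, which sends d to a common neighbour of X and d.
  Together with connectedness and infinity this gives every vertex infinite degree, and then every
  finite set with one common neighbour has infinitely many. A finite partial monomorphism f now
  extends forwards to any vertex x: an endomorphism g extending f makes g x a common neighbour of
  the images of the neighbours of x, so such common neighbours exist outside the range of f.
  It extends backwards to any y via a preimage of y under a surjective endomorphism extending f.
  Back-and-forth along an enumeration of the vertices yields a bimorphism.
\<close>

section \<open>Back-and-forth\<close>

definition extends :: "'a set \<times> ('a \<Rightarrow> 'b) \<Rightarrow> 'a set \<times> ('a \<Rightarrow> 'b) \<Rightarrow> bool" where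
  "extends s s' \<longleftrightarrow> fst s \<subseteq> fst s' \<and> (\<forall>x\<in>fst s. snd s' x = snd s x)"

lemma extends_refl: "extends s s"
  by (simp add: extends_def)

lemma extends_trans: "extends s1 s2 \<Longrightarrow> extends s2 s3 \<Longrightarrow> extends s1 s3"
  by (auto simp: extends_def)

lemma back_and_forth:
  fixes P :: "'a set \<times> ('a \<Rightarrow> 'a) \<Rightarrow> bool"
  assumes "countable V"
    and partial_bij: "\<And>s. P s \<Longrightarrow> fst s \<subseteq> V \<and> snd s ` fst s \<subseteq> V \<and> inj_on (snd s) (fst s)"
    and extend: "\<And>s x. P s \<Longrightarrow> x \<in> V \<Longrightarrow>
      \<exists>s'. P s' \<and> extends s s' \<and> x \<in> fst s' \<and> x \<in> snd s' ` fst s'"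
    and "P s0"
  shows "\<exists>g. bij_betw g V V \<and> extends s0 (V, g)
           \<and> (\<forall>x\<in>V. \<forall>y\<in>V. \<exists>s. P s \<and> extends s (V, g) \<and> x \<in> fst s \<and> y \<in> fst s)"
proof (cases "V = {}")
  case True
  then show ?thesis
    using partial_bij[OF \<open>P s0\<close>] by (intro exI[of _ id]) (auto simp: extends_def)
next
  case False
  define en where "en = from_nat_into V"
  define S where "S = rec_nat s0
    (\<lambda>n s. SOME s'. P s' \<and> extends s s' \<and> en n \<in> fst s' \<and> en n \<in> snd s' ` fst s')"
  have S_Suc: "P (S n) \<and> P (S (Suc n)) \<and> extends (S n) (S (Suc n))
      \<and> en n \<in> fst (S (Suc n)) \<and> en n \<in> snd (S (Suc n)) ` fst (S (Suc n))" for n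
  proof (induction n)
    case 0
    show ?case
      using someI_ex[OF extend[OF \<open>P s0\<close> from_nat_into[OF False]]] \<open>P s0\<close>
      by (simp add: S_def en_def)
  next
    case (Suc n)
    then show ?case
      using someI_ex[OF extend[of "S (Suc n)" "en (Suc n)"]] from_nat_into[OF False]
      by (simp add: S_def en_def)
  qed
  have S_mono: "extends (S m) (S n)" if "m \<le> n" for m n
    using that by (induction rule: dec_induct) (use S_Suc extends_refl extends_trans in blast)+
  define i where "i x = Suc (to_nat_on V x)" for x
  have in_S_i: "x \<in> fst (S (i x))" if "x \<in> V" for x
    using S_Suc[of "to_nat_on V x"] from_nat_into_to_nat_on[OF \<open>countable V\<close> that]
    by (simp add: i_def en_def)
  define g where "g x = snd (S (i x)) x" for x
  have extends_g: "extends (S k) (V, g)" for k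
    unfolding extends_def
  proof (intro conjI ballI)
    show "fst (S k) \<subseteq> fst (V, g)"
      using partial_bij S_Suc by simp
    fix x assume x: "x \<in> fst (S k)"
    have "x \<in> V"
      using x partial_bij S_Suc by blast
    define m where "m = max k (i x)"
    have "snd (S m) x = snd (S k) x" "snd (S m) x = g x"
      using S_mono[of k m] S_mono[of "i x" m] x in_S_i[OF \<open>x \<in> V\<close>]
      by (auto simp: m_def g_def extends_def)
    then show "snd (V, g) x = snd (S k) x" by simp
  qed
  have approx: "\<exists>k. x \<in> fst (S k) \<and> y \<in> fst (S k)" if "x \<in> V" "y \<in> V" for x y
  proof -
    have "extends (S (i x)) (S (max (i x) (i y)))" "extends (S (i y)) (S (max (i x) (i y)))"
      by (simp_all add: S_mono)
    then show ?thesis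
      using in_S_i[OF \<open>x \<in> V\<close>] in_S_i[OF \<open>y \<in> V\<close>] by (auto simp: extends_def)
  qed
  have S_bij: "fst (S k) \<subseteq> V" "snd (S k) ` fst (S k) \<subseteq> V" "inj_on (snd (S k)) (fst (S k))" for k
    using partial_bij S_Suc by blast+
  have g_S: "g x = snd (S k) x" if "x \<in> fst (S k)" for x k
    using extends_g[of k] that by (simp add: extends_def)
  have "bij_betw g V V"
    unfolding bij_betw_def
  proof (intro conjI inj_onI subset_antisym subsetI)
    fix x y assume "x \<in> V" "y \<in> V" "g x = g y"
    then obtain k where "x \<in> fst (S k)" "y \<in> fst (S k)" "snd (S k) x = snd (S k) y"
      using approx g_S by metis
    then show "x = y"
      using S_bij(3) by (blast dest: inj_onD)
  next
    fix z assume "z \<in> g ` V"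
    then obtain x where "x \<in> V" "z = snd (S (i x)) x"
      using g_def by blast
    then show "z \<in> V"
      using S_bij(2) in_S_i by blast
  next
    fix y assume y: "y \<in> V"
    define n where "n = to_nat_on V y"
    have "y \<in> snd (S (Suc n)) ` fst (S (Suc n))"
      using S_Suc[of n] from_nat_into_to_nat_on[OF \<open>countable V\<close> y] by (simp add: n_def en_def)
    then show "y \<in> g ` V"
      using S_bij(1) g_S by force
  qed
  moreover have "extends s0 (V, g)"
    using extends_g[of 0] by (simp add: S_def)
  ultimately show ?thesis
    using approx extends_g S_Suc by blast
qed

section \<open>Common neighbours in HE-homogeneous graphs\<close>

lemma graph_sym: "graph V E \<Longrightarrow> E x y \<Longrightarrow> E y x"
  and graph_vertices: "graph V E \<Longrightarrow> E x y \<Longrightarrow> x \<in> V \<and> y \<in> V"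
  and graph_irrefl: "graph V E \<Longrightarrow> \<not> E x x"
  by (auto simp: graph_def)

lemma HE_homogeneousD:
  "HE_homogeneous V E \<Longrightarrow> finite A \<Longrightarrow> A \<subseteq> V \<Longrightarrow> finite B \<Longrightarrow> B \<subseteq> V \<Longrightarrow> is_hom E A B f
   \<Longrightarrow> \<exists>g. is_hom E V V g \<and> g ` V = V \<and> (\<forall>x\<in>A. g x = f x)"
  unfolding HE_homogeneous_def by blast

lemma infinite_if_subsets_of_every_card:
  assumes "\<And>n. \<exists>T\<subseteq>A. finite T \<and> card T = n"
  shows "infinite A"
proof
  assume "finite A"
  obtain T where "T \<subseteq> A" "card T = Suc (card A)"
    using assms[of "Suc (card A)"] by blast
  then show False
    using card_mono[OF \<open>finite A\<close> \<open>T \<subseteq> A\<close>] by simp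
qed

lemma rtranclp_exits_set:
  assumes "E\<^sup>*\<^sup>* a b" "a \<in> K" "b \<notin> K"
  shows "\<exists>u\<in>K. \<exists>t. t \<notin> K \<and> E u t"
  using assms by (induction rule: rtranclp_induct) blast+

lemma HE_common_neighbour_insert:
  assumes G: "graph V E" and H: "HE_homogeneous V E" and "finite X" "X \<subseteq> V"
    and d: "\<forall>x\<in>X. E d x" and "E d e" "e \<notin> X"
  shows "\<exists>z. E z d \<and> (\<forall>x\<in>X. E z x)"
proof -
  define f where "f = (\<lambda>y. if y = e then d else y)"
  have "d \<in> V" "e \<in> V"
    using graph_vertices[OF G \<open>E d e\<close>] by auto
  have "is_hom E (insert e X) (insert d X) f"
    using d graph_sym[OF G] graph_irrefl[OF G] by (auto simp: is_hom_def f_def)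
  then obtain g where g: "is_hom E V V g" "\<forall>x\<in>insert e X. g x = f x"
    using HE_homogeneousD[OF H] assms(3,4) \<open>d \<in> V\<close> \<open>e \<in> V\<close> by (metis finite_insert insert_subset)
  have adj: "E (g d) (g x)" if "x \<in> insert e X" for x
    using g(1) that d \<open>E d e\<close> \<open>X \<subseteq> V\<close> \<open>d \<in> V\<close> \<open>e \<in> V\<close> unfolding is_hom_def by blast
  have "E (g d) d"
    using adj[of e] g(2) by (simp add: f_def)
  moreover have "E (g d) x" if "x \<in> X" for x
  proof -
    have "x \<noteq> e"
      using that \<open>e \<notin> X\<close> by blast
    then show ?thesis
      using adj[of x] g(2) that by (simp add: f_def)
  qed
  ultimately show ?thesis
    by blast
qed

definition clique :: "('a \<Rightarrow> 'a \<Rightarrow> bool) \<Rightarrow> 'a set \<Rightarrow> bool" where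
  "clique E K \<longleftrightarrow> (\<forall>a\<in>K. \<forall>b\<in>K. a \<noteq> b \<longrightarrow> E a b)"

lemma clique_common_neighbour:
  assumes G: "graph V E" and H: "HE_homogeneous V E" and C: "connected_graph V E"
    and "infinite V" "finite K" "K \<subseteq> V" "K \<noteq> {}" "clique E K"
  shows "\<exists>z. \<forall>a\<in>K. E z a"
proof -
  have "infinite (V - K)"
    using Diff_infinite_finite[OF \<open>finite K\<close> \<open>infinite V\<close>] .
  then obtain y where y: "y \<in> V" "y \<notin> K"
    using infinite_imp_nonempty by blast
  obtain k where "k \<in> K"
    using \<open>K \<noteq> {}\<close> by blast
  then have "E\<^sup>*\<^sup>* k y"
    using C \<open>K \<subseteq> V\<close> y(1) unfolding connected_graph_def by blast
  then obtain u t where u: "u \<in> K" "t \<notin> K" "E u t"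
    using rtranclp_exits_set \<open>k \<in> K\<close> y(2) by metis
  moreover have "\<forall>x\<in>K - {u}. E u x"
    using \<open>clique E K\<close> u(1) by (auto simp: clique_def)
  ultimately obtain z where "E z u" "\<forall>x\<in>K - {u}. E z x"
    using HE_common_neighbour_insert[OF G H, of "K - {u}" u t] assms(5,6) by blast
  then show ?thesis
    by blast
qed

lemma infinite_neighbourhood:
  assumes G: "graph V E" and H: "HE_homogeneous V E" and C: "connected_graph V E"
    and "infinite V" "x \<in> V"
  shows "infinite {y. E x y}"
proof (rule infinite_if_subsets_of_every_card)
  fix n
  show "\<exists>K\<subseteq>{y. E x y}. finite K \<and> card K = n"
  proof -
    have "\<exists>K\<subseteq>{y. E x y}. finite K \<and> card K = n \<and> clique E K"
    proof (induction n)
      case 0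
      show ?case by (auto simp: clique_def)
    next
      case (Suc n)
      then obtain K where K: "K \<subseteq> {y. E x y}" "finite K" "card K = n" "clique E K"
        by blast
      have "clique E (insert x K)"
        using K(1,4) graph_sym[OF G] by (auto simp: clique_def)
      moreover have "insert x K \<subseteq> V"
        using K(1) graph_vertices[OF G] \<open>x \<in> V\<close> by auto
      ultimately obtain z where z: "\<forall>a\<in>insert x K. E z a"
        using clique_common_neighbour[OF G H C \<open>infinite V\<close>] K(2) by blast
      then have "z \<notin> K" "E x z"
        using graph_irrefl[OF G] graph_sym[OF G] by auto
      then show ?case
        using K z graph_sym[OF G]
        by (intro exI[of _ "insert z K"]) (auto simp: clique_def)
    qed
    then show ?thesis by blast
  qed
qed

lemma infinite_common_neighbours:
  assumes G: "graph V E" and H: "HE_homogeneous V E" and C: "connected_graph V E"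
    and "infinite V" "finite X" "X \<subseteq> V" "z \<in> V" "\<forall>x\<in>X. E z x"
  shows "infinite {w\<in>V. \<forall>x\<in>X. E w x}"
proof (rule infinite_if_subsets_of_every_card)
  fix n
  have "\<exists>T\<subseteq>{w\<in>V. \<forall>x\<in>X. E w x}. finite T \<and> card T = n \<and> (\<exists>z\<in>V. \<forall>y\<in>X \<union> T. E z y)"
  proof (induction n)
    case 0
    show ?case
      using assms(7,8) by (rule_tac exI[of _ "{}"]) auto
  next
    case (Suc n)
    then obtain T z where T: "T \<subseteq> {w\<in>V. \<forall>x\<in>X. E w x}" "finite T" "card T = n"
      and z: "z \<in> V" "\<forall>y\<in>X \<union> T. E z y"
      by blast
    have "infinite ({y. E z y} - (X \<union> T))"
      using infinite_neighbourhood[OF G H C \<open>infinite V\<close> z(1)] \<open>finite X\<close> T(2)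
      by (simp add: Diff_infinite_finite)
    then obtain e where "E z e" "e \<notin> X \<union> T"
      using infinite_imp_nonempty by blast
    then obtain z' where z': "E z' z" "\<forall>y\<in>X \<union> T. E z' y"
      using HE_common_neighbour_insert[OF G H, of "X \<union> T" z e] T \<open>finite X\<close> \<open>X \<subseteq> V\<close> z(2)
      by blast
    have "z \<notin> T"
      using z(2) graph_irrefl[OF G] by auto
    then show ?case
      using T z z' graph_vertices[OF G z'(1)]
      by (intro exI[of _ "insert z T"]) auto
  qed
  then show "\<exists>T\<subseteq>{w\<in>V. \<forall>x\<in>X. E w x}. finite T \<and> card T = n"
    by blast
qed

section \<open>Extending finite partial monomorphisms\<close>

fun partial_mono :: "'a set \<Rightarrow> ('a \<Rightarrow> 'a \<Rightarrow> bool) \<Rightarrow> 'a set \<times> ('a \<Rightarrow> 'a) \<Rightarrow> bool" where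
  "partial_mono V E (D, f) \<longleftrightarrow> finite D \<and> D \<subseteq> V \<and> is_mono E D V f"

lemma partial_mono_partial_bij:
  "partial_mono V E s \<Longrightarrow> fst s \<subseteq> V \<and> snd s ` fst s \<subseteq> V \<and> inj_on (snd s) (fst s)"
  by (cases s) (simp add: is_mono_def is_hom_def)

lemma partial_mono_hom:
  "partial_mono V E s \<Longrightarrow> x \<in> fst s \<Longrightarrow> y \<in> fst s \<Longrightarrow> E x y \<Longrightarrow> E (snd s x) (snd s y)"
  by (cases s) (simp add: is_mono_def is_hom_def)

lemma partial_mono_insert:
  assumes G: "graph V E" and "partial_mono V E (D, f)"
    and "v \<in> V" "v \<notin> D" "w \<in> V" "w \<notin> f ` D"
    and adj: "\<forall>a\<in>D. E v a \<longrightarrow> E w (f a)"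
  shows "partial_mono V E (insert v D, f(v := w))"
proof -
  from assms(2) have D: "finite D" "D \<subseteq> V" "f ` D \<subseteq> V" "inj_on f D"
    and hom: "\<forall>a\<in>D. \<forall>b\<in>D. E a b \<longrightarrow> E (f a) (f b)"
    by (auto simp: is_mono_def is_hom_def)
  have "E ((f(v := w)) a) ((f(v := w)) b)" if ab: "a \<in> insert v D" "b \<in> insert v D" "E a b" for a b
  proof -
    consider "a = v" "b \<in> D" | "a \<in> D" "b = v" | "a \<in> D" "b \<in> D"
      using ab graph_irrefl[OF G, of v] by auto
    then show ?thesis
    proof cases
      case 1
      then show ?thesis using adj ab(3) \<open>v \<notin> D\<close> by auto
    next
      case 2
      then show ?thesis using adj ab(3) \<open>v \<notin> D\<close> graph_sym[OF G] by auto
    next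
      case 3
      then show ?thesis using hom ab(3) \<open>v \<notin> D\<close> by auto
    qed
  qed
  moreover have "inj_on (f(v := w)) (insert v D)"
    using D(4) \<open>v \<notin> D\<close> \<open>w \<notin> f ` D\<close> by (auto simp: inj_on_def)
  ultimately show ?thesis
    using D \<open>v \<in> V\<close> \<open>w \<in> V\<close> \<open>v \<notin> D\<close> by (simp add: is_mono_def is_hom_def image_subset_iff)
qed

lemma HE_extend_partial_mono:
  assumes "HE_homogeneous V E" "partial_mono V E (D, f)"
  shows "\<exists>g. is_hom E V V g \<and> g ` V = V \<and> (\<forall>x\<in>D. g x = f x)"
proof -
  have "finite D" "D \<subseteq> V" "f ` D \<subseteq> V" "is_hom E D (f ` D) f"
    using assms(2) by (auto simp: is_mono_def is_hom_def)
  then show ?thesis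
    using HE_homogeneousD[OF assms(1), of D "f ` D" f] by blast
qed

lemma partial_mono_forth:
  assumes G: "graph V E" and H: "HE_homogeneous V E" and C: "connected_graph V E"
    and "infinite V" and P: "partial_mono V E (D, f)" and "x \<in> V"
  shows "\<exists>s'. partial_mono V E s' \<and> extends (D, f) s' \<and> x \<in> fst s'"
proof (cases "x \<in> D")
  case True
  then show ?thesis
    using P extends_refl by fastforce
next
  case False
  obtain g where g: "is_hom E V V g" "\<forall>a\<in>D. g a = f a"
    using HE_extend_partial_mono[OF H P] by blast
  let ?X = "f ` {a\<in>D. E x a}"
  have X: "finite ?X" "?X \<subseteq> V" and "finite (f ` D)"
    using P by (auto simp: is_mono_def is_hom_def)
  have "g x \<in> V"
    using g(1) \<open>x \<in> V\<close> by (auto simp: is_hom_def)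
  moreover have "\<forall>y\<in>?X. E (g x) y"
  proof
    fix y assume "y \<in> ?X"
    then obtain a where "a \<in> D" "E x a" "y = f a"
      by blast
    moreover have "a \<in> V"
      using P \<open>a \<in> D\<close> by auto
    ultimately have "E (g x) (g a)"
      using g(1) \<open>x \<in> V\<close> unfolding is_hom_def by blast
    then show "E (g x) y"
      using g(2) \<open>a \<in> D\<close> \<open>y = f a\<close> by simp
  qed
  ultimately have "infinite {w\<in>V. \<forall>y\<in>?X. E w y}"
    by (rule infinite_common_neighbours[OF G H C \<open>infinite V\<close> X])
  then have "infinite ({w\<in>V. \<forall>y\<in>?X. E w y} - f ` D)"
    by (rule Diff_infinite_finite[OF \<open>finite (f ` D)\<close>])
  then obtain w where w: "w \<in> V" "w \<notin> f ` D" "\<forall>y\<in>?X. E w y"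
    using infinite_imp_nonempty by blast
  then have "\<forall>a\<in>D. E x a \<longrightarrow> E w (f a)"
    by blast
  then have "partial_mono V E (insert x D, f(x := w))"
    by (rule partial_mono_insert[OF G P \<open>x \<in> V\<close> False w(1,2)])
  moreover have "extends (D, f) (insert x D, f(x := w))"
    using False by (auto simp: extends_def)
  moreover have "x \<in> fst (insert x D, f(x := w))"
    by simp
  ultimately show ?thesis
    by blast
qed

lemma partial_mono_back:
  assumes G: "graph V E" and H: "HE_homogeneous V E"
    and P: "partial_mono V E (D, f)" and "y \<in> V"
  shows "\<exists>s'. partial_mono V E s' \<and> extends (D, f) s' \<and> y \<in> snd s' ` fst s'"
proof (cases "y \<in> f ` D")
  case True
  then show ?thesis
    using P extends_refl by fastforce
next
  case False
  obtain g where g: "is_hom E V V g" "g ` V = V" "\<forall>a\<in>D. g a = f a"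
    using HE_extend_partial_mono[OF H P] by blast
  have "y \<in> g ` V"
    using g(2) \<open>y \<in> V\<close> by simp
  then obtain v where v: "v \<in> V" "g v = y"
    by blast
  have "v \<notin> D"
    using False g(3) v(2) by force
  have "E y (f a)" if "a \<in> D" "E v a" for a
  proof -
    have "a \<in> V"
      using P \<open>a \<in> D\<close> by auto
    then have "E (g v) (g a)"
      using g(1) v(1) \<open>E v a\<close> unfolding is_hom_def by blast
    then show ?thesis
      using g(3) v(2) \<open>a \<in> D\<close> by simp
  qed
  then have "partial_mono V E (insert v D, f(v := y))"
    using partial_mono_insert[OF G P v(1) \<open>v \<notin> D\<close> \<open>y \<in> V\<close> False] by simp
  moreover have "extends (D, f) (insert v D, f(v := y))"
    using \<open>v \<notin> D\<close> by (auto simp: extends_def)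
  moreover have "y \<in> snd (insert v D, f(v := y)) ` fst (insert v D, f(v := y))"
    by simp
  ultimately show ?thesis
    by blast
qed

lemma partial_mono_back_and_forth_step:
  assumes "graph V E" "HE_homogeneous V E" "connected_graph V E" "infinite V"
    and "partial_mono V E s" "x \<in> V"
  shows "\<exists>s'. partial_mono V E s' \<and> extends s s' \<and> x \<in> fst s' \<and> x \<in> snd s' ` fst s'"
proof -
  obtain D f where "s = (D, f)"
    by fastforce
  then obtain s1 where s1: "partial_mono V E s1" "extends s s1" "x \<in> fst s1"
    using partial_mono_forth[OF assms(1-4) _ assms(6)] assms(5) by blast
  obtain D1 f1 where "s1 = (D1, f1)"
    by fastforce
  then obtain s2 where s2: "partial_mono V E s2" "extends s1 s2" "x \<in> snd s2 ` fst s2"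
    using partial_mono_back[OF assms(1,2) _ assms(6)] s1(1) by blast
  have "x \<in> fst s2"
    using s1(3) s2(2) by (auto simp: extends_def)
  then show ?thesis
    using s1(2) s2 extends_trans by blast
qed

lemma partial_mono_extends_to_bimorphism:
  assumes "graph V E" "countable V" "infinite V" "connected_graph V E" "HE_homogeneous V E"
    and "partial_mono V E s0"
  shows "\<exists>g. is_hom E V V g \<and> bij_betw g V V \<and> extends s0 (V, g)"
proof -
  have "\<exists>g. bij_betw g V V \<and> extends s0 (V, g)
      \<and> (\<forall>x\<in>V. \<forall>y\<in>V. \<exists>s. partial_mono V E s \<and> extends s (V, g) \<and> x \<in> fst s \<and> y \<in> fst s)"
    by (intro back_and_forth[where P = "partial_mono V E"] \<open>countable V\<close> \<open>partial_mono V E s0\<close>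
        partial_mono_partial_bij partial_mono_back_and_forth_step[OF assms(1,5,4,3)])
  then obtain g where g: "bij_betw g V V" "extends s0 (V, g)"
    and local: "\<forall>x\<in>V. \<forall>y\<in>V. \<exists>s. partial_mono V E s \<and> extends s (V, g) \<and> x \<in> fst s \<and> y \<in> fst s"
    by (elim exE conjE)
  have "E (g x) (g y)" if "x \<in> V" "y \<in> V" "E x y" for x y
  proof -
    obtain s where s: "partial_mono V E s" "extends s (V, g)" "x \<in> fst s" "y \<in> fst s"
      using local \<open>x \<in> V\<close> \<open>y \<in> V\<close> by blast
    then have "g x = snd s x" "g y = snd s y"
      by (simp_all add: extends_def)
    then show ?thesis
      using partial_mono_hom[OF s(1,3,4) \<open>E x y\<close>] by simp
  qed
  then have "is_hom E V V g"
    using g(1) by (simp add: is_hom_def bij_betw_def)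
  then show ?thesis
    using g by blast
qed

theorem lemma8p1:
  fixes V :: "'a set" and E :: "'a \<Rightarrow> 'a \<Rightarrow> bool"
  assumes "graph V E"
    and "countable V" and "infinite V"
    and "connected_graph V E"
    and "HE_homogeneous V E"
  shows "MB_homogeneous V E"
  unfolding MB_homogeneous_def
proof (intro allI impI, elim conjE)
  fix A B f
  assume "finite A" "A \<subseteq> V" "finite B" "B \<subseteq> V" "is_mono E A B f"
  then have "partial_mono V E (A, f)"
    unfolding partial_mono.simps is_mono_def is_hom_def by blast
  then obtain g where "is_hom E V V g" "bij_betw g V V" "extends (A, f) (V, g)"
    using partial_mono_extends_to_bimorphism[OF assms] by blast
  then show "\<exists>g. is_hom E V V g \<and> bij_betw g V V \<and> (\<forall>x\<in>A. g x = f x)"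
    by (auto simp: extends_def)
qed

end
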